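(* For any valid scheme (satisfying (C1)–(C8)) with $N\ge2$, $K\ge2$, \[ \frac{N}{N-1}\,\rho_U+N\rho_S\ \ge\ \frac{N}{N-1}. \]
   Context: Model (SPIR with user-side common randomness). There are $N\ge1$ non-colluding databases, each storing the same $K\ge2$ messages $W_1,\dots,W_K$. Each message consists of $L$ i.i.d. symbols uniform over a sufficiently large finite field $\mathbb{F}_q$; entropies are in $q$-ary units, so $H(W_k)=L$ and $H(W_{1:K})=KL$. The databases share server-side common randomness $\mathcal{R}_S$, unknown to the user. The user holds user-side common randomness $\mathcal{R}_U$, a subset of the components of $\mathcal{R}_S$, unknown to the databases except for its size (uniform over subsets of given cardinality). $\mathcal{F}$ is the user's retrieval-strategy randomness. To retrieve $W_k$ the user sends $Q_n^{[k,\mathcal{R}_U]}$ to database $n$, receiving $A_n^{[k,\mathcal{R}_U]}$; $W_{\bar k}=\{W_j:j\ne k\}$. A valid scheme satisfies for all $k,n,\mathcal{R}_U$: (C1) $I(W_{1:K};k,\mathcal{F},\mathcal{R}_S,\mathcal{R}_U)=0$; (C2) $I(Q_{1:N}^{[k,\mathcal{R}_U]};W_{1:K},\mathcal{R}_S\setminus\mathcal{R}_U)=0$; (C3) $H(Q_{1:N}^{[k,\mathcal{R}_U]}\mid\mathcal{F})=0$; (C4) $H(A_n^{[k,\mathcal{R}_U]}\mid Q_n^{[k,\mathcal{R}_U]},W_{1:K},\mathcal{R}_S)=0$; (C5) $H(W_k\mid\mathcal{F},A_{1:N}^{[k,\mathcal{R}_U]},\mathcal{R}_U)=0$; (C6)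 user privacy: for all $k,k',n,\mathcal{R}_U$ there is $\mathcal{R}_U'$ with $H(\mathcal{R}_U')=H(\mathcal{R}_U)$ and $(Q_n^{[k,\mathcal{R}_U]},A_n^{[k,\mathcal{R}_U]},W_{1:K},\mathcal{R}_S)\sim(Q_n^{[k',\mathcal{R}_U']},A_n^{[k',\mathcal{R}_U']},W_{1:K},\mathcal{R}_S)$; (C7) $I(W_{\bar k};\mathcal{F},A_{1:N}^{[k,\mathcal{R}_U]},\mathcal{R}_U)=0$; (C8) $I(\mathcal{R}_S\setminus\mathcal{R}_U;\mathcal{F},A_{1:N}^{[k,\mathcal{R}_U]},W_k,\mathcal{R}_U)=0$. $\rho_S=H(\mathcal{R}_S)/L$, $\rho_U=H(\mathcal{R}_U)/L$. *)

theory Defs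
  imports "HOL-Probability.Probability"
begin

definition ent :: "real \<Rightarrow> 'w pmf \<Rightarrow> ('w \<Rightarrow> 'a) \<Rightarrow> real" where
  "ent b M X = - (\<Sum>x \<in> set_pmf (map_pmf X M).
       pmf (map_pmf X M) x * log b (pmf (map_pmf X M) x))"

definition cent :: "real \<Rightarrow> 'w pmf \<Rightarrow> ('w \<Rightarrow> 'a) \<Rightarrow> ('w \<Rightarrow> 'b) \<Rightarrow> real" where
  "cent b M X Y = ent b M (\<lambda>\<omega>. (X \<omega>, Y \<omega>)) - ent b M Y"

definition minf :: "real \<Rightarrow> 'w pmf \<Rightarrow> ('w \<Rightarrow> 'a) \<Rightarrow> ('w \<Rightarrow> 'b) \<Rightarrow> real" where
  "minf b M X Y = ent b M X + ent b M Y - ent b M (\<lambda>\<omega>. (X \<omega>, Y \<omega>))"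

definition comps :: "('w \<Rightarrow> nat \<Rightarrow> 'r) \<Rightarrow> nat set \<Rightarrow> 'w \<Rightarrow> (nat \<Rightarrow> 'r)" where
  "comps RS S = (\<lambda>\<omega>. restrict (RS \<omega>) S)"

(* all messages W_{1:K} (indexed 0..K-1) *)
definition Wall :: "nat \<Rightarrow> (nat \<Rightarrow> 'w \<Rightarrow> 'm) \<Rightarrow> 'w \<Rightarrow> 'm list" where
  "Wall K W = (\<lambda>\<omega>. map (\<lambda>j. W j \<omega>) [0..<K])"

definition Wbar :: "nat \<Rightarrow> nat \<Rightarrow> (nat \<Rightarrow> 'w \<Rightarrow> 'm) \<Rightarrow> 'w \<Rightarrow> 'm list" where
  "Wbar K k W = (\<lambda>\<omega>. map (\<lambda>j. W j \<omega>) (filter (\<lambda>j. j \<noteq> k) [0..<K]))"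

definition allN :: "nat \<Rightarrow> (nat \<Rightarrow> 'w \<Rightarrow> 'x) \<Rightarrow> 'w \<Rightarrow> 'x list" where
  "allN N X = (\<lambda>\<omega>. map (\<lambda>n. X n \<omega>) [0..<N])"

definition msgs :: "nat \<Rightarrow> nat \<Rightarrow> 'f list list set" where
  "msgs K L = {ws. length ws = K \<and> (\<forall>w\<in>set ws. length w = L)}"

(* admissible user-side randomness: index subsets of size u of the m components *)
definition adm :: "nat \<Rightarrow> nat \<Rightarrow> nat set set" where
  "adm m u = {S. S \<subseteq> {..<m} \<and> card S = u}"

(* Conditions (C1)-(C8), entropies in q-ary units with q = CARD('f).
   Q n k S / A n k S : query to / answer of database n when retrieving W_k
   with user-side randomness R_U = comps RS S. *)
definition valid_scheme ::
  "'w pmf \<Rightarrow> nat \<Rightarrow> nat \<Rightarrow> nat \<Rightarrow> nat \<Rightarrow> (nat \<Rightarrow> 'w \<Rightarrow> 'f::finite list)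
   \<Rightarrow> ('w \<Rightarrow> nat \<Rightarrow> 'r) \<Rightarrow> ('w \<Rightarrow> 'g)
   \<Rightarrow> (nat \<Rightarrow> nat \<Rightarrow> nat set \<Rightarrow> 'w \<Rightarrow> 'q) \<Rightarrow> (nat \<Rightarrow> nat \<Rightarrow> nat set \<Rightarrow> 'w \<Rightarrow> 'a) \<Rightarrow> bool"
where
  "valid_scheme M N K m u W RS F Q A \<longleftrightarrow>
    (let b = real CARD('f); RSall = comps RS {..<m} in
     \<forall>k<K. \<forall>S\<in>adm m u.
      let RU = comps RS S; Rrest = comps RS ({..<m} - S);
          Qs = allN N (\<lambda>n. Q n k S); As = allN N (\<lambda>n. A n k S) in
      \<comment> \<open>C1\<close>
      minf b M (Wall K W) (\<lambda>\<omega>. (F \<omega>, RSall \<omega>, RU \<omega>)) = 0 \<and>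
      \<comment> \<open>C2\<close>
      minf b M Qs (\<lambda>\<omega>. (Wall K W \<omega>, Rrest \<omega>)) = 0 \<and>
      \<comment> \<open>C3\<close>
      cent b M Qs F = 0 \<and>
      \<comment> \<open>C4\<close>
      (\<forall>n<N. cent b M (A n k S) (\<lambda>\<omega>. (Q n k S \<omega>, Wall K W \<omega>, RSall \<omega>)) = 0) \<and>
      \<comment> \<open>C5\<close>
      cent b M (W k) (\<lambda>\<omega>. (F \<omega>, As \<omega>, RU \<omega>)) = 0 \<and>
      \<comment> \<open>C6\<close>
      (\<forall>k'<K. \<forall>n<N. \<exists>S'\<in>adm m u.
          ent b M (comps RS S') = ent b M RU \<and>
          map_pmf (\<lambda>\<omega>. (Q n k S \<omega>, A n k S \<omega>, Wall K W \<omega>, RSall \<omega>)) M =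
          map_pmf (\<lambda>\<omega>. (Q n k' S' \<omega>, A n k' S' \<omega>, Wall K W \<omega>, RSall \<omega>)) M) \<and>
      \<comment> \<open>C7\<close>
      minf b M (Wbar K k W) (\<lambda>\<omega>. (F \<omega>, As \<omega>, RU \<omega>)) = 0 \<and>
      \<comment> \<open>C8\<close>
      minf b M Rrest (\<lambda>\<omega>. (F \<omega>, As \<omega>, W k \<omega>, RU \<omega>)) = 0)"

end

theory Submission
  imports Defs
begin

text \<open>Retrieve \<open>W\<^sub>0\<close> and condition on the user's side \<open>V = (F, R\<^sub>U)\<close>, which is independent of the
  messages, so that \<open>L = H(W\<^sub>0 | V) = I(W\<^sub>0; A\<^sub>1 | V) + H(W\<^sub>0 | A\<^sub>1, V)\<close>. By decodability the second
  term is at most \<open>H(A\<^sub>2, \<dots>, A\<^sub>N | V)\<close>. The leak \<open>I(W\<^sub>0; A\<^sub>1 | V)\<close> is at most \<open>H(R\<^sub>U)\<close>: given its query,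
  an answer is independent of \<open>W\<^sub>0\<close> by user privacy (the same joint distribution arises when another
  message is requested, and then \<open>W\<^sub>0\<close> is among the messages the user must not learn), while all
  messages together with the unused server randomness are independent of \<open>F\<close> given \<open>R\<^sub>U\<close>. Finally
  each answer satisfies \<open>H(A\<^sub>n | V) \<le> H(R\<^sub>S)\<close>: it is a function of its query, the messages and
  \<open>R\<^sub>S\<close>, and given the query it carries no information about the messages. Hence
  \<open>L \<le> H(R\<^sub>U) + (N - 1) H(R\<^sub>S)\<close>.\<close>

section \<open>Entropy of finitely supported distributions\<close>

context
  fixes M :: "'w pmf"
  assumes finite_M: "finite (set_pmf M)"
begin

lemma pmf_map_pmf_eq_measure_fibre:
  "pmf (map_pmf X M) x = measure M {\<omega>\<in>set_pmf M. X \<omega> = x}"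
proof -
  have "pmf (map_pmf X M) x = measure M (X -` {x} \<inter> set_pmf M)"
    by (simp add: pmf_map measure_Int_set_pmf)
  also have "X -` {x} \<inter> set_pmf M = {\<omega>\<in>set_pmf M. X \<omega> = x}" by auto
  finally show ?thesis .
qed

lemma sum_set_pmf_map_pmf:
  "(\<Sum>x\<in>set_pmf (map_pmf X M). pmf (map_pmf X M) x * g x) = (\<Sum>\<omega>\<in>set_pmf M. pmf M \<omega> * g (X \<omega>))"
proof -
  have fibre: "(\<Sum>\<omega>\<in>{\<omega>\<in>set_pmf M. X \<omega> = x}. pmf M \<omega>) = pmf (map_pmf X M) x" for x
    using finite_M by (simp add: pmf_map_pmf_eq_measure_fibre measure_measure_pmf_finite)
  have "(\<Sum>\<omega>\<in>set_pmf M. pmf M \<omega> * g (X \<omega>)) =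
     (\<Sum>x\<in>X ` set_pmf M. \<Sum>\<omega>\<in>{\<omega>\<in>set_pmf M. X \<omega> = x}. pmf M \<omega> * g (X \<omega>))"
    using finite_M by (rule sum.image_gen)
  also have "\<dots> = (\<Sum>x\<in>X ` set_pmf M. pmf (map_pmf X M) x * g x)"
    by (intro sum.cong refl) (simp add: sum_distrib_right[symmetric] fibre)
  finally show ?thesis by simp
qed

lemma ent_eq_sum_set_pmf:
  "ent b M X = - (\<Sum>\<omega>\<in>set_pmf M. pmf M \<omega> * log b (pmf (map_pmf X M) (X \<omega>)))"
  unfolding ent_def by (subst sum_set_pmf_map_pmf) simp

lemma ent_cong_fibres:
  assumes "\<And>\<omega> \<omega>'. \<omega> \<in> set_pmf M \<Longrightarrow> \<omega>' \<in> set_pmf M \<Longrightarrow> X \<omega>' = X \<omega> \<longleftrightarrow> Y \<omega>' = Y \<omega>"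
  shows "ent b M X = ent b M Y"
proof -
  have "{\<omega>'\<in>set_pmf M. X \<omega>' = X \<omega>} = {\<omega>'\<in>set_pmf M. Y \<omega>' = Y \<omega>}" if "\<omega> \<in> set_pmf M" for \<omega>
    using assms that by blast
  then show ?thesis
    unfolding ent_eq_sum_set_pmf pmf_map_pmf_eq_measure_fibre by (intro arg_cong[where f=uminus] sum.cong) simp_all
qed

lemma ent_le_ent_pair:
  assumes b: "1 < b"
  shows "ent b M Y \<le> ent b M (\<lambda>\<omega>. (X \<omega>, Y \<omega>))"
  unfolding ent_eq_sum_set_pmf neg_le_iff_le
proof (rule sum_mono)
  fix \<omega> assume \<omega>: "\<omega> \<in> set_pmf M"
  let ?XY = "\<lambda>\<omega>. (X \<omega>, Y \<omega>)"
  have pos: "0 < measure M {\<omega>'\<in>set_pmf M. ?XY \<omega>' = ?XY \<omega>}"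
    using \<omega> by (intro measure_pmf_posI) auto
  have "measure M {\<omega>'\<in>set_pmf M. ?XY \<omega>' = ?XY \<omega>} \<le> measure M {\<omega>'\<in>set_pmf M. Y \<omega>' = Y \<omega>}"
    by (rule measure_pmf.finite_measure_mono) auto
  with pos b have "log b (pmf (map_pmf ?XY M) (?XY \<omega>)) \<le> log b (pmf (map_pmf Y M) (Y \<omega>))"
    unfolding pmf_map_pmf_eq_measure_fibre[of ?XY] pmf_map_pmf_eq_measure_fibre[of Y] by simp
  then show "pmf M \<omega> * log b (pmf (map_pmf ?XY M) (?XY \<omega>)) \<le> pmf M \<omega> * log b (pmf (map_pmf Y M) (Y \<omega>))"
    by (simp add: mult_left_mono)
qed

lemma ent_submodularity_gap_eq_sum:
  "ent b M (\<lambda>x. (X x, Z x)) + ent b M (\<lambda>x. (Y x, Z x)) - ent b M (\<lambda>x. (X x, Y x, Z x)) - ent b M Z =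
   (\<Sum>\<omega>\<in>set_pmf M. pmf M \<omega> * log b (pmf (map_pmf (\<lambda>x. (X x, Y x, Z x)) M) (X \<omega>, Y \<omega>, Z \<omega>) /
      (pmf (map_pmf (\<lambda>x. (X x, Z x)) M) (X \<omega>, Z \<omega>) *
       (pmf (map_pmf (\<lambda>x. (Y x, Z x)) M) (Y \<omega>, Z \<omega>) / pmf (map_pmf Z M) (Z \<omega>)))))"
    (is "_ = (\<Sum>\<omega>\<in>set_pmf M. pmf M \<omega> * log b (?ratio \<omega>))")
proof -
  let ?l = "\<lambda>T \<omega>. pmf M \<omega> * log b (pmf (map_pmf T M) (T \<omega>))"
  have "pmf M \<omega> * log b (?ratio \<omega>) = ?l (\<lambda>x. (X x, Y x, Z x)) \<omega> - ?l (\<lambda>x. (X x, Z x)) \<omega>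
      - ?l (\<lambda>x. (Y x, Z x)) \<omega> + ?l Z \<omega>" if "\<omega> \<in> set_pmf M" for \<omega>
  proof -
    have "0 < pmf (map_pmf T M) (T \<omega>)" for T :: "'w \<Rightarrow> 'z"
      using that by (simp add: pmf_positive)
    from this[of "\<lambda>x. (X x, Y x, Z x)"] this[of "\<lambda>x. (X x, Z x)"] this[of "\<lambda>x. (Y x, Z x)"] this[of Z]
    show ?thesis
      by (simp add: log_divide log_mult algebra_simps)
  qed
  then have "(\<Sum>\<omega>\<in>set_pmf M. pmf M \<omega> * log b (?ratio \<omega>)) = (\<Sum>\<omega>\<in>set_pmf M. ?l (\<lambda>x. (X x, Y x, Z x)) \<omega>
      - ?l (\<lambda>x. (X x, Z x)) \<omega> - ?l (\<lambda>x. (Y x, Z x)) \<omega> + ?l Z \<omega>)"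
    by (rule sum.cong[OF refl])
  then show ?thesis
    by (simp add: ent_eq_sum_set_pmf sum.distrib sum_subtractf)
qed

text \<open>The library's conditional mutual information is stated for simple functions, i.e. functions with
  finite range on the whole space; this holds for random variables that are constant off the support.\<close>

lemma ent_submodular_if_constant_off_support:
  assumes b: "1 < b" and w0: "w0 \<in> set_pmf M"
    and const: "\<And>\<omega>. \<omega> \<notin> set_pmf M \<Longrightarrow> X \<omega> = X w0 \<and> Y \<omega> = Y w0 \<and> Z \<omega> = Z w0"
  shows "ent b M (\<lambda>\<omega>. (X \<omega>, Y \<omega>, Z \<omega>)) + ent b M Z \<le> ent b M (\<lambda>\<omega>. (X \<omega>, Z \<omega>)) + ent b M (\<lambda>\<omega>. (Y \<omega>, Z \<omega>))"
proof -
  interpret information_space "measure_pmf M" b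
    by unfold_locales (rule b)
  have range: "range T = T ` set_pmf M" if "\<And>\<omega>. \<omega> \<notin> set_pmf M \<Longrightarrow> T \<omega> = T w0" for T :: "'w \<Rightarrow> 'z"
    using that w0 by (auto intro: image_eqI)
  have simple: "simple_function (measure_pmf M) T" if "\<And>\<omega>. \<omega> \<notin> set_pmf M \<Longrightarrow> T \<omega> = T w0" for T :: "'w \<Rightarrow> 'z"
    unfolding simple_function_def using range[of T, OF that] finite_M by simp
  have sX: "simple_function (measure_pmf M) X" and sY: "simple_function (measure_pmf M) Y"
    and sZ: "simple_function (measure_pmf M) Z"
    using simple const by blast+
  let ?p = "\<lambda>T. pmf (map_pmf T M)"
  have distributed: "simple_distributed (measure_pmf M) T (?p T)"
    if "simple_function (measure_pmf M) T" for T :: "'w \<Rightarrow> 'z"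
    using measure_pmf.simple_distributedI[OF that measure_nonneg refl] by (simp add: pmf_map[abs_def])
  note Pz = distributed[OF sZ]
    and Pyz = distributed[OF simple_function_Pair[OF sY sZ]]
    and Pxz = distributed[OF simple_function_Pair[OF sX sZ]]
    and Pxyz = distributed[OF simple_function_Pair[OF sX simple_function_Pair[OF sY sZ]]]
  let ?XYZ = "\<lambda>x. (X x, Y x, Z x)"
  let ?ratio = "\<lambda>x y z. ?p ?XYZ (x, y, z) / (?p (\<lambda>x. (X x, Z x)) (x, z) * (?p (\<lambda>x. (Y x, Z x)) (y, z) / ?p Z z))"
  have "0 \<le> (\<Sum>(x, y, z)\<in>?XYZ ` space M. ?p ?XYZ (x, y, z) * log b (?ratio x y z))"
    using conditional_mutual_information_nonneg[OF sX sY sZ] conditional_mutual_information_eq[OF Pz Pyz Pxz Pxyz]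
    by simp
  also have "?XYZ ` space M = set_pmf (map_pmf ?XYZ M)"
    using range[of ?XYZ] const by simp
  finally have "0 \<le> (\<Sum>t\<in>set_pmf (map_pmf ?XYZ M). ?p ?XYZ t * (\<lambda>(x, y, z). log b (?ratio x y z)) t)"
    by (simp add: case_prod_beta)
  then show ?thesis
    unfolding sum_set_pmf_map_pmf using ent_submodularity_gap_eq_sum[of b X Z Y] by simp
qed

lemma ent_submodular:
  assumes b: "1 < b"
  shows "ent b M (\<lambda>\<omega>. (X \<omega>, Y \<omega>, Z \<omega>)) + ent b M Z \<le> ent b M (\<lambda>\<omega>. (X \<omega>, Z \<omega>)) + ent b M (\<lambda>\<omega>. (Y \<omega>, Z \<omega>))"
proof -
  obtain w0 where w0: "w0 \<in> set_pmf M" using set_pmf_not_empty by fast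
  define X' where "X' \<omega> = (if \<omega> \<in> set_pmf M then X \<omega> else X w0)" for \<omega>
  define Y' where "Y' \<omega> = (if \<omega> \<in> set_pmf M then Y \<omega> else Y w0)" for \<omega>
  define Z' where "Z' \<omega> = (if \<omega> \<in> set_pmf M then Z \<omega> else Z w0)" for \<omega>
  have "ent b M (\<lambda>\<omega>. (X' \<omega>, Y' \<omega>, Z' \<omega>)) + ent b M Z'
      \<le> ent b M (\<lambda>\<omega>. (X' \<omega>, Z' \<omega>)) + ent b M (\<lambda>\<omega>. (Y' \<omega>, Z' \<omega>))"
    by (rule ent_submodular_if_constant_off_support[OF b w0]) (simp add: X'_def Y'_def Z'_def w0)
  moreover have "ent b M (\<lambda>\<omega>. (X' \<omega>, Y' \<omega>, Z' \<omega>)) = ent b M (\<lambda>\<omega>. (X \<omega>, Y \<omega>, Z \<omega>))"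
    and "ent b M Z' = ent b M Z"
    and "ent b M (\<lambda>\<omega>. (X' \<omega>, Z' \<omega>)) = ent b M (\<lambda>\<omega>. (X \<omega>, Z \<omega>))"
    and "ent b M (\<lambda>\<omega>. (Y' \<omega>, Z' \<omega>)) = ent b M (\<lambda>\<omega>. (Y \<omega>, Z \<omega>))"
    by (rule ent_cong_fibres; simp add: X'_def Y'_def Z'_def)+
  ultimately show ?thesis by simp
qed

end

section \<open>Entropy of partitions\<close>

text \<open>Random variables are compared through the partitions of the sample space they induce, encoded as
  equivalence relations: a tuple of random variables then corresponds to the meet \<^const>\<open>inf\<close> of their
  kernels, so identities between joint entropies become lattice identities.\<close>

definition equiv_kernel :: "('w \<Rightarrow> 'x) \<Rightarrow> 'w \<Rightarrow> 'w \<Rightarrow> bool" where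
  "equiv_kernel X = (\<lambda>\<omega> \<omega>'. X \<omega> = X \<omega>')"

text \<open>Since \<^term>\<open>R \<omega>\<close> is the class of \<^term>\<open>\<omega>\<close>, this is the entropy of the partition into classes.\<close>

definition partition_ent :: "real \<Rightarrow> 'w pmf \<Rightarrow> ('w \<Rightarrow> 'w \<Rightarrow> bool) \<Rightarrow> real" where
  "partition_ent b M R = ent b M R"

lemma equivp_equiv_kernel [simp]: "equivp (equiv_kernel X)"
  unfolding equivp_def equiv_kernel_def by (auto simp: fun_eq_iff)

lemma equiv_kernel_equivp: "equivp R \<Longrightarrow> equiv_kernel R = R"
  unfolding equivp_def equiv_kernel_def by (intro ext) metis

lemma equiv_kernel_pair: "equiv_kernel (\<lambda>\<omega>. (X \<omega>, Y \<omega>)) = inf (equiv_kernel X) (equiv_kernel Y)"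
  unfolding equiv_kernel_def by (auto simp: fun_eq_iff)

lemma equiv_kernel_const: "equiv_kernel (\<lambda>\<omega>. c) = top"
  unfolding equiv_kernel_def by (auto simp: fun_eq_iff)

lemma equivp_top [simp]: "equivp top"
  using equivp_equiv_kernel[of "\<lambda>\<omega>. undefined"] by (simp add: equiv_kernel_const)

lemma equivp_inf [simp]:
  assumes "equivp R" "equivp R'"
  shows "equivp (inf R R')"
proof -
  have "inf R R' = equiv_kernel (\<lambda>\<omega>. (R \<omega>, R' \<omega>))"
    using assms by (simp add: equiv_kernel_pair equiv_kernel_equivp)
  then show ?thesis by simp
qed

context
  fixes M :: "'w pmf" and b :: real
  assumes finite_M: "finite (set_pmf M)" and b: "1 < b"
begin

lemma ent_eq_partition_ent_equiv_kernel: "ent b M X = partition_ent b M (equiv_kernel X)"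
  unfolding partition_ent_def
  by (rule ent_cong_fibres[OF finite_M]) (auto simp: equiv_kernel_def fun_eq_iff)

lemma partition_ent_inf_eq_ent_pair:
  "equivp R \<Longrightarrow> equivp R' \<Longrightarrow> partition_ent b M (inf R R') = ent b M (\<lambda>\<omega>. (R \<omega>, R' \<omega>))"
  by (simp add: ent_eq_partition_ent_equiv_kernel equiv_kernel_pair equiv_kernel_equivp)

lemma partition_ent_mono:
  "equivp R \<Longrightarrow> equivp R' \<Longrightarrow> partition_ent b M R' \<le> partition_ent b M (inf R R')"
  using ent_le_ent_pair[OF finite_M b, of R' R] partition_ent_inf_eq_ent_pair[of R R']
  by (simp add: partition_ent_def)

lemma partition_ent_submodular:
  assumes "equivp R" "equivp R'" "equivp R''"
  shows "partition_ent b M (inf (inf R R') R'') + partition_ent b M R''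
    \<le> partition_ent b M (inf R R'') + partition_ent b M (inf R' R'')"
proof -
  have "partition_ent b M (inf (inf R R') R'') = ent b M (\<lambda>\<omega>. (R \<omega>, R' \<omega>, R'' \<omega>))"
    using assms by (simp add: ent_eq_partition_ent_equiv_kernel equiv_kernel_pair equiv_kernel_equivp inf_assoc)
  then show ?thesis
    using ent_submodular[OF finite_M b, of R R' R''] assms
      partition_ent_inf_eq_ent_pair[of R R''] partition_ent_inf_eq_ent_pair[of R' R'']
    by (simp add: partition_ent_def)
qed

lemma partition_ent_top: "partition_ent b M top = 0"
  using ent_eq_partition_ent_equiv_kernel[of "\<lambda>\<omega>. ()"] by (simp add: equiv_kernel_const ent_def map_pmf_const)

lemma partition_ent_subadditive:
  "equivp R \<Longrightarrow> equivp R' \<Longrightarrow> partition_ent b M (inf R R') \<le> partition_ent b M R + partition_ent b M R'"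
  using partition_ent_submodular[of R R' top] by (simp add: partition_ent_top)

lemma partition_ent_determined:
  assumes "equivp R" "equivp R'" "equivp R''"
    and "partition_ent b M (inf R R') = partition_ent b M R'"
  shows "partition_ent b M (inf R (inf R' R'')) = partition_ent b M (inf R' R'')"
proof -
  have "partition_ent b M (inf (inf R R'') R') + partition_ent b M R'
      \<le> partition_ent b M (inf R R') + partition_ent b M (inf R'' R')"
    using assms by (intro partition_ent_submodular) auto
  moreover have "partition_ent b M (inf R'' R') \<le> partition_ent b M (inf R (inf R'' R'))"
    using assms by (intro partition_ent_mono) auto
  ultimately show ?thesis
    using assms(4) by (simp only: inf_aci)
qed

lemma mutual_info_mono:
  assumes "equivp R" "equivp R'" "equivp T" "equivp T'"
  shows "partition_ent b M R + partition_ent b M T - partition_ent b M (inf R T) \<le>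
    partition_ent b M (inf R R') + partition_ent b M (inf T T') - partition_ent b M (inf (inf R R') (inf T T'))"
proof -
  have "partition_ent b M (inf (inf R' T) R) + partition_ent b M R
      \<le> partition_ent b M (inf R' R) + partition_ent b M (inf T R)"
    using assms by (intro partition_ent_submodular) auto
  moreover have "partition_ent b M (inf (inf T' (inf R R')) T) + partition_ent b M T
      \<le> partition_ent b M (inf T' T) + partition_ent b M (inf (inf R R') T)"
    using assms by (intro partition_ent_submodular) auto
  ultimately show ?thesis
    by (simp only: inf_aci)
qed

lemma partition_ent_list_le:
  assumes "equivp C" and "\<And>j. j \<in> set js \<Longrightarrow> partition_ent b M (inf (equiv_kernel (G j)) C) - partition_ent b M C \<le> B"
  shows "partition_ent b M (inf (equiv_kernel (\<lambda>\<omega>. map (\<lambda>j. G j \<omega>) js)) C) - partition_ent b M C \<le> real (length js) * B"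
  using assms(2)
proof (induction js)
  case Nil
  have "equiv_kernel (\<lambda>\<omega>. map (\<lambda>j. G j \<omega>) []) = top"
    by (simp add: equiv_kernel_const)
  then show ?case by simp
next
  case (Cons j js)
  let ?Gs = "equiv_kernel (\<lambda>\<omega>. map (\<lambda>j. G j \<omega>) js)"
  have cons: "equiv_kernel (\<lambda>\<omega>. map (\<lambda>j. G j \<omega>) (j # js)) = inf (equiv_kernel (G j)) ?Gs"
    unfolding equiv_kernel_def by (intro ext) simp
  have "partition_ent b M (inf (inf (equiv_kernel (G j)) ?Gs) C) + partition_ent b M C
     \<le> partition_ent b M (inf (equiv_kernel (G j)) C) + partition_ent b M (inf ?Gs C)"
    using assms(1) by (intro partition_ent_submodular) auto
  moreover have "partition_ent b M (inf ?Gs C) - partition_ent b M C \<le> real (length js) * B"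
    using Cons.IH Cons.prems by (meson list.set_intros(2))
  moreover have "partition_ent b M (inf (equiv_kernel (G j)) C) - partition_ent b M C \<le> B"
    by (rule Cons.prems[OF list.set_intros(1)])
  moreover have "real (length (j # js)) * B = B + real (length js) * B"
    by (simp add: algebra_simps)
  ultimately show ?case
    unfolding cons by linarith
qed

end

lemma ent_eq_if_map_pmf_eq:
  "map_pmf T M = map_pmf T' M \<Longrightarrow> ent b M (\<lambda>\<omega>. g (T \<omega>)) = ent b M (\<lambda>\<omega>. g (T' \<omega>))"
  unfolding ent_def by (metis map_pmf_comp)

lemma nth_Wall: "j < K \<Longrightarrow> Wall K W \<omega> ! j = W j \<omega>"
  by (simp add: Wall_def)

lemma Wall_eq_iff: "Wall K W \<omega> = Wall K W \<omega>' \<longleftrightarrow> (\<forall>j<K. W j \<omega> = W j \<omega>')"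
  unfolding Wall_def map_eq_conv by auto

lemma Wbar_eq_iff: "Wbar K k W \<omega> = Wbar K k W \<omega>' \<longleftrightarrow> (\<forall>j<K. j \<noteq> k \<longrightarrow> W j \<omega> = W j \<omega>')"
  unfolding Wbar_def map_eq_conv by auto

lemma allN_eq_iff: "allN N G \<omega> = allN N G \<omega>' \<longleftrightarrow> (\<forall>n<N. G n \<omega> = G n \<omega>')"
  unfolding allN_def map_eq_conv by auto

lemma comps_eq_iff: "comps RS T \<omega> = comps RS T \<omega>' \<longleftrightarrow> (\<forall>i\<in>T. RS \<omega> i = RS \<omega>' i)"
  unfolding comps_def by (metis restrict_apply' restrict_ext)

lemma equiv_kernel_Wall_split:
  "k < K \<Longrightarrow> equiv_kernel (Wall K W) = inf (equiv_kernel (W k)) (equiv_kernel (Wbar K k W))"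
  unfolding equiv_kernel_def by (intro ext) (auto simp: Wall_eq_iff Wbar_eq_iff)

lemma equiv_kernel_Wbar_absorb:
  "j < K \<Longrightarrow> j \<noteq> k \<Longrightarrow> inf (equiv_kernel (W j)) (equiv_kernel (Wbar K k W)) = equiv_kernel (Wbar K k W)"
  unfolding equiv_kernel_def by (intro ext) (auto simp: Wbar_eq_iff)

lemma equiv_kernel_allN_absorb:
  "n < N \<Longrightarrow> inf (equiv_kernel (G n)) (equiv_kernel (allN N G)) = equiv_kernel (allN N G)"
  unfolding equiv_kernel_def by (intro ext) (auto simp: allN_eq_iff)

lemma equiv_kernel_allN_split:
  "0 < N \<Longrightarrow> equiv_kernel (allN N G) = inf (equiv_kernel (G 0)) (equiv_kernel (\<lambda>\<omega>. map (\<lambda>n. G n \<omega>) [1..<N]))"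
  unfolding equiv_kernel_def allN_def by (intro ext) (simp add: upt_conv_Cons)

lemma equiv_kernel_comps_Un:
  "equiv_kernel (comps RS (T \<union> T')) = inf (equiv_kernel (comps RS T)) (equiv_kernel (comps RS T'))"
  unfolding equiv_kernel_def by (intro ext) (auto simp: comps_eq_iff)

lemma pmf_of_set_Times:
  assumes "finite A" "A \<noteq> {}" "finite B" "B \<noteq> {}"
  shows "pmf_of_set (A \<times> B) = pair_pmf (pmf_of_set A) (pmf_of_set B)"
proof (rule pmf_eqI)
  fix ab :: "'a \<times> 'b"
  show "pmf (pmf_of_set (A \<times> B)) ab = pmf (pair_pmf (pmf_of_set A) (pmf_of_set B)) ab"
    by (cases ab) (simp add: assms pmf_pair card_cartesian_product indicator_def)
qed

lemma ent_pmf_of_set: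
  assumes "map_pmf X M = pmf_of_set A" "finite A" "A \<noteq> {}"
  shows "ent b M X = log b (card A)"
proof -
  have "ent b M X = - (\<Sum>x\<in>A. 1 / card A * log b (1 / card A))"
    unfolding ent_def assms(1) using assms(2,3) by simp
  also have "\<dots> = log b (card A)"
    using assms(2,3) by (simp add: log_divide)
  finally show ?thesis .
qed

lemma msgs_Suc: "msgs (Suc K) L = (\<lambda>(w, ws). w # ws) ` ({w. length w = L} \<times> msgs K L)"
  unfolding msgs_def by (auto simp: length_Suc_conv)

lemma card_lists_length: "card {w :: 'f::finite list. length w = L} = CARD('f) ^ L"
  using card_lists_length_eq[of "UNIV :: 'f set" L] by simp

lemma finite_lists_length: "finite {w :: 'f::finite list. length w = L}"
  using finite_lists_length_eq[of "UNIV :: 'f set" L] by simp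

lemma finite_msgs: "finite (msgs K L :: 'f::finite list list set)"
proof -
  have "msgs K L = {ws. set ws \<subseteq> {w :: 'f list. length w = L} \<and> length ws = K}"
    unfolding msgs_def by auto
  then show ?thesis
    using finite_lists_length_eq[OF finite_lists_length] by simp
qed

lemma msgs_nonempty: "msgs K L \<noteq> {}"
  unfolding msgs_def by (auto intro!: exI[of _ "replicate K (replicate L undefined)"])

lemma map_hd_pmf_of_set_msgs:
  "map_pmf hd (pmf_of_set (msgs (Suc K) L :: 'f::finite list list set)) = pmf_of_set {w. length w = L}"
proof -
  let ?B = "{w :: 'f list. length w = L}"
  have B: "?B \<noteq> {}"
    by (auto intro!: exI[of _ "replicate L undefined"])
  have "pmf_of_set (msgs (Suc K) L :: 'f list list set) =
      map_pmf (\<lambda>(w, ws). w # ws) (pmf_of_set (?B \<times> msgs K L))"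
    unfolding msgs_Suc using B
    by (intro map_pmf_of_set_inj[symmetric]) (auto simp: inj_on_def finite_lists_length finite_msgs msgs_nonempty)
  then have "map_pmf hd (pmf_of_set (msgs (Suc K) L :: 'f list list set)) = map_pmf fst (pmf_of_set (?B \<times> (msgs K L :: 'f list list set)))"
    by (simp add: pmf.map_comp o_def case_prod_beta')
  also have "\<dots> = pmf_of_set ?B"
    by (simp add: pmf_of_set_Times[OF finite_lists_length B finite_msgs msgs_nonempty] map_fst_pair_pmf)
  finally show ?thesis .
qed

section \<open>Valid schemes\<close>

locale spir_scheme =
  fixes M :: "'w pmf"
    and W :: "nat \<Rightarrow> 'w \<Rightarrow> 'f::finite list"
    and RS :: "'w \<Rightarrow> nat \<Rightarrow> 'r"
    and F :: "'w \<Rightarrow> 'g"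
    and Q :: "nat \<Rightarrow> nat \<Rightarrow> nat set \<Rightarrow> 'w \<Rightarrow> 'q"
    and A :: "nat \<Rightarrow> nat \<Rightarrow> nat set \<Rightarrow> 'w \<Rightarrow> 'a"
    and N K L m u :: nat
    and b :: real
  assumes two_databases: "2 \<le> N" and two_messages: "2 \<le> K"
    and finite_M: "finite (set_pmf M)"
    and uniform_messages: "map_pmf (Wall K W) M = pmf_of_set (msgs K L)"
    and valid: "valid_scheme M N K m u W RS F Q A"
    and base: "b = real CARD('f)" and two_symbols: "2 \<le> CARD('f)"
begin

abbreviation H :: "('w \<Rightarrow> 'w \<Rightarrow> bool) \<Rightarrow> real" where
  "H \<equiv> partition_ent b M"

abbreviation "msg j \<equiv> equiv_kernel (W j)"
abbreviation "others k \<equiv> equiv_kernel (Wbar K k W)"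
abbreviation "strategy \<equiv> equiv_kernel F"
abbreviation "rand T \<equiv> equiv_kernel (comps RS T)"
abbreviation "rest S \<equiv> rand ({..<m} - S)"
abbreviation "query n k S \<equiv> equiv_kernel (Q n k S)"
abbreviation "answer n k S \<equiv> equiv_kernel (A n k S)"
abbreviation "answers k S \<equiv> equiv_kernel (allN N (\<lambda>n. A n k S))"
abbreviation "later_answers k S \<equiv> equiv_kernel (\<lambda>\<omega>. map (\<lambda>n. A n k S \<omega>) [1..<N])"
abbreviation "view k S \<equiv> inf strategy (inf (answers k S) (rand S))"

text \<open>In the notation of the paper, \<^term>\<open>view k S\<close> is \<open>(F, A\<^sub>1\<^sub>:\<^sub>N, R\<^sub>U)\<close> with \<open>R\<^sub>U\<close> the components \<^term>\<open>S\<close> of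
  \<open>R\<^sub>S\<close>, and \<^term>\<open>rest S\<close> is \<open>R\<^sub>S \<setminus> R\<^sub>U\<close>.\<close>

abbreviation cmi :: "('w \<Rightarrow> 'w \<Rightarrow> bool) \<Rightarrow> ('w \<Rightarrow> 'w \<Rightarrow> bool) \<Rightarrow> ('w \<Rightarrow> 'w \<Rightarrow> bool) \<Rightarrow> real" where
  "cmi X Y Z \<equiv> H (inf X Z) + H (inf Y Z) - H (inf (inf X Y) Z) - H Z"

lemma base_gt_1: "1 < b"
  using base two_symbols by simp

lemmas ent_eq_H = ent_eq_partition_ent_equiv_kernel[OF finite_M base_gt_1]
lemmas H_mono = partition_ent_mono[OF finite_M base_gt_1]
lemmas H_submodular = partition_ent_submodular[OF finite_M base_gt_1]
lemmas H_subadditive = partition_ent_subadditive[OF finite_M base_gt_1]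
lemmas H_determined = partition_ent_determined[OF finite_M base_gt_1]
lemmas H_mutual_info_mono = mutual_info_mono[OF finite_M base_gt_1]

lemmas partition_normalize =
  inf_aci inf_idem inf_top_left equivp_equiv_kernel equivp_inf equivp_top True_implies_equals

lemma rand_split: "S \<in> adm m u \<Longrightarrow> rand {..<m} = inf (rand S) (rest S)"
  using equiv_kernel_comps_Un[of RS S "{..<m} - S"] by (auto simp: adm_def Un_absorb1)

lemma H_msg_0: "H (msg 0) = real L"
proof -
  obtain K' where K': "K = Suc K'" using two_messages by (cases K) auto
  have "map_pmf (W 0) M = map_pmf hd (map_pmf (Wall K W) M)"
    by (simp add: pmf.map_comp o_def Wall_def K' upt_conv_Cons del: upt_Suc)
  also have "\<dots> = pmf_of_set {w. length w = L}"
    unfolding uniform_messages unfolding K' by (rule map_hd_pmf_of_set_msgs)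
  finally have "ent b M (W 0) = log b (card {w :: 'f list. length w = L})"
    by (rule ent_pmf_of_set) (auto simp: finite_lists_length intro!: exI[of _ "replicate L undefined"])
  then show ?thesis
    unfolding ent_eq_H using base base_gt_1 by (simp add: card_lists_length log_nat_power)
qed

context
  fixes k :: nat and S :: "nat set"
  assumes k: "k < K" and S: "S \<in> adm m u"
begin

lemmas valid_at = valid[unfolded valid_scheme_def Let_def base[symmetric], rule_format, OF k S]

lemma messages_indep_strategy_randomness:
  "H (inf (msg k) (others k)) + H (inf strategy (inf (rand S) (rest S)))
    = H (inf (inf (msg k) (others k)) (inf strategy (inf (rand S) (rest S))))"
proof -
  have "H (inf (msg k) (others k)) + H (inf strategy (inf (inf (rand S) (rest S)) (rand S)))
      - H (inf (inf (msg k) (others k)) (inf strategy (inf (inf (rand S) (rest S)) (rand S)))) = 0"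
    using valid_at
    unfolding minf_def ent_eq_H equiv_kernel_pair equiv_kernel_Wall_split[OF k] rand_split[OF S]
    by blast
  then show ?thesis
    by ((simp only: inf_aci inf_idem); linarith)
qed

lemma query_determined:
  assumes n: "n < N" and Z: "equivp Z"
  shows "H (inf (query n k S) (inf strategy Z)) = H (inf strategy Z)"
proof (rule H_determined)
  let ?queries = "equiv_kernel (allN N (\<lambda>n. Q n k S))"
  have "H (inf ?queries strategy) - H strategy = 0"
    using valid_at unfolding cent_def ent_eq_H equiv_kernel_pair by blast
  moreover have "H strategy \<le> H (inf (query n k S) strategy)"
    by (rule H_mono) simp_all
  moreover have "H (inf (query n k S) strategy) \<le> H (inf ?queries strategy)"
  proof -
    have "inf ?queries (inf (query n k S) strategy) = inf (inf (query n k S) ?queries) strategy"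
      by (simp only: inf_aci)
    also have "\<dots> = inf ?queries strategy"
      by (simp only: equiv_kernel_allN_absorb[OF n, of "\<lambda>n. Q n k S"])
    finally show ?thesis
      using H_mono[of ?queries "inf (query n k S) strategy"] by simp
  qed
  ultimately show "H (inf (query n k S) strategy) = H strategy" by linarith
qed (simp_all add: Z)

lemma answer_determined:
  assumes n: "n < N"
  shows "H (inf (answer n k S) (inf (query n k S) (inf (inf (msg k) (others k)) (inf (rand S) (rest S)))))
    = H (inf (query n k S) (inf (inf (msg k) (others k)) (inf (rand S) (rest S))))"
proof -
  have "H (inf (answer n k S) (inf (query n k S) (inf (inf (msg k) (others k)) (inf (rand S) (rest S)))))
    - H (inf (query n k S) (inf (inf (msg k) (others k)) (inf (rand S) (rest S)))) = 0"
    using valid_at n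
    unfolding cent_def ent_eq_H equiv_kernel_pair equiv_kernel_Wall_split[OF k] rand_split[OF S]
    by blast
  then show ?thesis by simp
qed

lemma message_decodable: "H (inf (msg k) (view k S)) = H (view k S)"
proof -
  have "H (inf (msg k) (view k S)) - H (view k S) = 0"
    using valid_at unfolding cent_def ent_eq_H equiv_kernel_pair by blast
  then show ?thesis by simp
qed

lemma others_indep_view: "H (others k) + H (view k S) = H (inf (others k) (view k S))"
proof -
  have "H (others k) + H (view k S) - H (inf (others k) (view k S)) = 0"
    using valid_at unfolding minf_def ent_eq_H equiv_kernel_pair by blast
  then show ?thesis by simp
qed

lemma rest_indep_view: "H (rest S) + H (inf (msg k) (view k S)) = H (inf (rest S) (inf (msg k) (view k S)))"
proof -
  have "H (rest S) + H (inf strategy (inf (answers k S) (inf (msg k) (rand S))))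
      - H (inf (rest S) (inf strategy (inf (answers k S) (inf (msg k) (rand S))))) = 0"
    using valid_at unfolding minf_def ent_eq_H equiv_kernel_pair by blast
  then show ?thesis
    by ((simp only: inf_aci); linarith)
qed

lemma privacy:
  assumes "k' < K" "n < N"
  obtains S' where "S' \<in> adm m u"
    and "map_pmf (\<lambda>\<omega>. (Q n k S \<omega>, A n k S \<omega>, Wall K W \<omega>, comps RS {..<m} \<omega>)) M =
         map_pmf (\<lambda>\<omega>. (Q n k' S' \<omega>, A n k' S' \<omega>, Wall K W \<omega>, comps RS {..<m} \<omega>)) M"
  using valid_at assms by (elim conjE) blast

lemma msg_indep_strategy_user:
  "H (msg k) + H (inf strategy (rand S)) = H (inf (msg k) (inf strategy (rand S)))"
proof -
  have "H (msg k) + H (inf strategy (rand S)) - H (inf (msg k) (inf strategy (rand S)))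
     \<le> H (inf (msg k) (others k)) + H (inf (inf strategy (rand S)) (rest S))
       - H (inf (inf (msg k) (others k)) (inf (inf strategy (rand S)) (rest S)))"
    by (rule H_mutual_info_mono) simp_all
  moreover have "H (inf (msg k) (inf strategy (rand S))) \<le> H (msg k) + H (inf strategy (rand S))"
    by (rule H_subadditive) simp_all
  ultimately show ?thesis
    using messages_indep_strategy_randomness by ((simp only: inf_aci); linarith)
qed

lemma messages_rest_indep_strategy_given_user:
  "cmi (inf (inf (msg k) (others k)) (rest S)) strategy (rand S) = 0"
proof -
  let ?X = "inf (inf (msg k) (others k)) (rest S)"
  have "H (rest S) + H (inf strategy (rand S)) - H (inf (rest S) (inf strategy (rand S)))
     \<le> H (inf (rest S) (rest S)) + H (inf (inf strategy (rand S)) (inf (msg k) (answers k S)))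
       - H (inf (inf (rest S) (rest S)) (inf (inf strategy (rand S)) (inf (msg k) (answers k S))))"
    by (rule H_mutual_info_mono) simp_all
  moreover have "H (inf (rest S) (rand S)) \<le> H (rest S) + H (rand S)"
    by (rule H_subadditive) simp_all
  moreover have "H (inf (inf (msg k) (others k)) (inf (rand S) (rest S)))
      \<le> H (inf (msg k) (others k)) + H (inf (rand S) (rest S))"
    by (rule H_subadditive) simp_all
  moreover have "H (inf (inf ?X strategy) (rand S)) + H (rand S) \<le> H (inf ?X (rand S)) + H (inf strategy (rand S))"
    by (rule H_submodular) simp_all
  ultimately show ?thesis
    using messages_indep_strategy_randomness rest_indep_view
    by ((simp only: inf_aci inf_idem); linarith)
qed

lemma others_indep_local_view:
  assumes n: "n < N"
  shows "H (others k) + H (inf (answer n k S) (inf (query n k S) (msg k)))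
    = H (inf (others k) (inf (answer n k S) (inf (query n k S) (msg k))))"
proof -
  have answer: "H (inf (answer n k S) (inf (answers k S) Z)) = H (inf (answers k S) Z)" if "equivp Z" for Z
    by (rule H_determined) (simp_all add: that equiv_kernel_allN_absorb[OF n, of "\<lambda>n. A n k S"])
  have msg: "H (inf (msg k) (inf (view k S) Z)) = H (inf (view k S) Z)" if "equivp Z" for Z
    by (rule H_determined) (simp_all add: that message_decodable)
  have "H (others k) + H (inf (answer n k S) (inf (query n k S) (msg k)))
      - H (inf (others k) (inf (answer n k S) (inf (query n k S) (msg k))))
    \<le> H (inf (others k) (others k)) + H (inf (inf (answer n k S) (inf (query n k S) (msg k))) (view k S))
      - H (inf (inf (others k) (others k)) (inf (inf (answer n k S) (inf (query n k S) (msg k))) (view k S)))"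
    by (rule H_mutual_info_mono) simp_all
  moreover have "H (inf (others k) (inf (answer n k S) (inf (query n k S) (msg k))))
      \<le> H (others k) + H (inf (answer n k S) (inf (query n k S) (msg k)))"
    by (rule H_subadditive) simp_all
  moreover note
    answer[of "inf strategy (inf (query n k S) (inf (msg k) (rand S)))"]
    answer[of "inf strategy (inf (query n k S) (inf (msg k) (inf (rand S) (others k))))"]
    query_determined[OF n, of "inf (msg k) (inf (answers k S) (rand S))"]
    query_determined[OF n, of "inf (msg k) (inf (answers k S) (inf (rand S) (others k)))"]
    msg[of top] msg[of "others k"]
  ultimately show ?thesis
    using others_indep_view
    by ((simp only: partition_normalize); linarith)
qed

lemma msg_given_first_answer_le:
  "H (inf (msg k) (inf (answer 0 k S) (inf strategy (rand S)))) - H (inf (answer 0 k S) (inf strategy (rand S)))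
    \<le> H (inf (later_answers k S) (inf strategy (rand S))) - H (inf strategy (rand S))"
proof -
  have answers: "answers k S = inf (answer 0 k S) (later_answers k S)"
    using two_databases by (intro equiv_kernel_allN_split) simp
  have "H (inf (msg k) (inf (answer 0 k S) (inf strategy (rand S))))
      \<le> H (inf (later_answers k S) (inf (msg k) (inf (answer 0 k S) (inf strategy (rand S)))))"
    by (rule H_mono) simp_all
  moreover have "H (inf (inf (answer 0 k S) (later_answers k S)) (inf strategy (rand S))) + H (inf strategy (rand S))
      \<le> H (inf (answer 0 k S) (inf strategy (rand S))) + H (inf (later_answers k S) (inf strategy (rand S)))"
    by (rule H_submodular) simp_all
  ultimately show ?thesis
    using message_decodable unfolding answers by ((simp only: inf_aci); linarith)
qed

end

lemma msg_indep_answer_given_query: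
  assumes k: "k < K" and S: "S \<in> adm m u" and n: "n < N"
  shows "cmi (msg k) (answer n k S) (query n k S) = 0"
proof -
  have "\<exists>k'<K. k' \<noteq> k"
    using two_messages by (intro exI[of _ "if k = 0 then 1 else 0"]) auto
  then obtain k' where k': "k' < K" "k' \<noteq> k" by blast
  obtain S' where S': "S' \<in> adm m u"
    and same: "map_pmf (\<lambda>\<omega>. (Q n k S \<omega>, A n k S \<omega>, Wall K W \<omega>, comps RS {..<m} \<omega>)) M =
      map_pmf (\<lambda>\<omega>. (Q n k' S' \<omega>, A n k' S' \<omega>, Wall K W \<omega>, comps RS {..<m} \<omega>)) M"
    using privacy[OF k S k'(1) n] .
  have "H (inf (msg k) (query n k S)) = H (inf (msg k) (query n k' S'))"
    using ent_eq_if_map_pmf_eq[OF same, of b "\<lambda>t. (fst (snd (snd t)) ! k, fst t)"]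
    by (simp add: ent_eq_H equiv_kernel_pair nth_Wall[OF k])
  moreover have "H (inf (answer n k S) (query n k S)) = H (inf (answer n k' S') (query n k' S'))"
    using ent_eq_if_map_pmf_eq[OF same, of b "\<lambda>t. (fst (snd t), fst t)"]
    by (simp add: ent_eq_H equiv_kernel_pair)
  moreover have "H (inf (inf (msg k) (answer n k S)) (query n k S))
      = H (inf (inf (msg k) (answer n k' S')) (query n k' S'))"
    using ent_eq_if_map_pmf_eq[OF same, of b "\<lambda>t. ((fst (snd (snd t)) ! k, fst (snd t)), fst t)"]
    by (simp add: ent_eq_H equiv_kernel_pair nth_Wall[OF k])
  moreover have "H (query n k S) = H (query n k' S')"
    using ent_eq_if_map_pmf_eq[OF same, of b fst] by (simp add: ent_eq_H)
  moreover have "H (msg k) + H (inf (answer n k' S') (query n k' S'))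
      - H (inf (msg k) (inf (answer n k' S') (query n k' S')))
    \<le> H (others k') + H (inf (inf (answer n k' S') (query n k' S')) (msg k'))
      - H (inf (others k') (inf (inf (answer n k' S') (query n k' S')) (msg k')))"
    using H_mutual_info_mono[of "msg k" "others k'" "inf (answer n k' S') (query n k' S')" "msg k'"]
    by (simp add: equiv_kernel_Wbar_absorb[OF k k'(2)[symmetric]])
  moreover have "H (inf (msg k) (query n k' S')) \<le> H (msg k) + H (query n k' S')"
    by (rule H_subadditive) simp_all
  moreover have "H (inf (inf (msg k) (answer n k S)) (query n k S)) + H (query n k S)
      \<le> H (inf (msg k) (query n k S)) + H (inf (answer n k S) (query n k S))"
    by (rule H_submodular) simp_all
  ultimately show ?thesis
    using others_indep_local_view[OF k'(1) S' n] by ((simp only: inf_aci); linarith)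
qed

lemma answer_leak_le_user_randomness:
  assumes k: "k < K" and S: "S \<in> adm m u" and n: "n < N"
  shows "cmi (msg k) (answer n k S) (inf strategy (rand S)) \<le> H (rand S)"
proof -
  let ?W = "msg k" and ?A = "answer n k S" and ?Q = "query n k S" and ?F = "strategy" and ?U = "rand S"
  let ?X = "inf (inf (msg k) (others k)) (rest S)"
  note query = query_determined[OF k S n]
  have answer_0: "H (inf ?A (inf ?Q (inf ?X ?U))) = H (inf ?Q (inf ?X ?U))"
    using answer_determined[OF k S n] by (simp only: inf_aci)
  have answer: "H (inf ?A (inf (inf ?Q (inf ?X ?U)) ?F)) = H (inf (inf ?Q (inf ?X ?U)) ?F)"
    by (rule H_determined) (simp_all add: answer_0)
  have "cmi ?W ?A (inf ?F ?U) = cmi ?W ?A (inf ?Q (inf ?F ?U))"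
    using query[of ?U] query[of "inf ?W ?U"] query[of "inf ?A ?U"] query[of "inf (inf ?W ?A) ?U"]
    by ((simp only: partition_normalize); linarith)
  also have "\<dots> \<le> cmi ?W (inf ?F ?U) (inf ?A ?Q)"
    using msg_indep_answer_given_query[OF k S n]
      H_submodular[of ?W "inf ?F ?U" ?Q]
    by ((simp only: partition_normalize); linarith)
  also have "\<dots> \<le> H ?U + cmi ?W ?F (inf ?U (inf ?A ?Q))"
    using H_subadditive[of ?U "inf ?A ?Q"] H_mono[of ?U "inf ?W (inf ?A ?Q)"]
    by ((simp only: partition_normalize); linarith)
  also have "\<dots> \<le> H ?U + cmi ?X ?F (inf ?U (inf ?A ?Q))"
    using H_submodular[of "inf (others k) (rest S)" ?F "inf ?W (inf ?U (inf ?A ?Q))"]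
    by ((simp only: partition_normalize); linarith)
  also have "\<dots> \<le> H ?U + cmi ?X ?F (inf ?U ?Q)"
    using H_submodular[of ?F ?A "inf ?U ?Q"] answer answer_0
    by ((simp only: partition_normalize); linarith)
  also have "\<dots> \<le> H ?U + cmi ?X ?F ?U"
    using H_submodular[of ?X ?Q ?U] query[of ?U] query[of "inf ?X ?U"]
    by ((simp only: partition_normalize); linarith)
  also have "\<dots> = H ?U"
    using messages_rest_indep_strategy_given_user[OF k S] by ((simp only: partition_normalize); linarith)
  finally show ?thesis .
qed

lemma answer_given_strategy_le:
  assumes k: "k < K" and S: "S \<in> adm m u" and n: "n < N"
  shows "H (inf (answer n k S) (inf strategy (rand S))) - H (inf strategy (rand S)) \<le> H (rand {..<m})"
proof -
  let ?W = "msg k" and ?Wb = "others k" and ?A = "answer n k S" and ?Q = "query n k S"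
    and ?F = "strategy" and ?U = "rand S"
  note query = query_determined[OF k S n]
  have "H (inf ?A (inf ?F ?U)) - H (inf ?F ?U) \<le> H (inf ?A ?Q) - H ?Q"
    using query[of ?U] query[of "inf ?A ?U"] H_submodular[of ?A "inf ?F ?U" ?Q]
    by ((simp only: partition_normalize); linarith)
  also have "\<dots> \<le> H (inf ?A (inf (inf ?W ?Wb) ?Q)) - H (inf (inf ?W ?Wb) ?Q)"
    using msg_indep_answer_given_query[OF k S n] others_indep_local_view[OF k S n]
      H_subadditive[of ?Wb "inf ?W ?Q"]
    by ((simp only: partition_normalize); linarith)
  also have "\<dots> \<le> H (rand {..<m})"
    using H_mono[of "inf ?U (rest S)" "inf ?A (inf (inf ?W ?Wb) ?Q)"] answer_determined[OF k S n]
      H_subadditive[of "inf ?U (rest S)" "inf (inf ?W ?Wb) ?Q"]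
    unfolding rand_split[OF S] by ((simp only: partition_normalize); linarith)
  finally show ?thesis .
qed

lemma later_answers_given_strategy_le:
  assumes k: "k < K" and S: "S \<in> adm m u"
  shows "H (inf (later_answers k S) (inf strategy (rand S))) - H (inf strategy (rand S))
    \<le> real (N - 1) * H (rand {..<m})"
proof -
  have "H (inf (later_answers k S) (inf strategy (rand S))) - H (inf strategy (rand S))
      \<le> real (length [1..<N]) * H (rand {..<m})"
    by (rule partition_ent_list_le[OF finite_M base_gt_1]) (auto intro: answer_given_strategy_le[OF k S])
  then show ?thesis by simp
qed

lemma user_randomness_bound:
  assumes S: "S \<in> adm m u"
  shows "real L \<le> H (rand S) + real (N - 1) * H (rand {..<m})"
proof -
  have K: "0 < K" and N: "0 < N"
    using two_messages two_databases by simp_all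
  let ?W = "msg 0" and ?A = "answer 0 0 S" and ?V = "inf strategy (rand S)"
  have "real L = H (inf ?W ?V) - H ?V"
    using H_msg_0 msg_indep_strategy_user[OF K S] by linarith
  also have "\<dots> = cmi ?W ?A ?V + (H (inf ?W (inf ?A ?V)) - H (inf ?A ?V))"
    by ((simp only: inf_aci); linarith)
  also have "\<dots> \<le> H (rand S) + (H (inf (later_answers 0 S) ?V) - H ?V)"
    using answer_leak_le_user_randomness[OF K S N] msg_given_first_answer_le[OF K S] by linarith
  also have "\<dots> \<le> H (rand S) + real (N - 1) * H (rand {..<m})"
    using later_answers_given_strategy_le[OF K S] by linarith
  finally show ?thesis .
qed

end

theorem lemma10:
  fixes M :: "'w pmf"
    and W :: "nat \<Rightarrow> 'w \<Rightarrow> ('f::{finite,field}) list"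
    and RS :: "'w \<Rightarrow> nat \<Rightarrow> 'r"
    and F :: "'w \<Rightarrow> 'g"
    and Q :: "nat \<Rightarrow> nat \<Rightarrow> nat set \<Rightarrow> 'w \<Rightarrow> 'q"
    and A :: "nat \<Rightarrow> nat \<Rightarrow> nat set \<Rightarrow> 'w \<Rightarrow> 'a"
    and N K L m u :: nat and S :: "nat set"
  assumes "N \<ge> 2" and "K \<ge> 2" and "L \<ge> 1"
    and "finite (set_pmf M)"
    and "map_pmf (Wall K W) M = pmf_of_set (msgs K L)"
    and "valid_scheme M N K m u W RS F Q A"
    and "S \<in> adm m u"
  shows "real N / (real N - 1) * (ent (real CARD('f)) M (comps RS S) / real L)
           + real N * (ent (real CARD('f)) M (comps RS {..<m}) / real L)
         \<ge> real N / (real N - 1)"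
proof -
  have "card {0 :: 'f, 1} \<le> CARD('f)"
    by (rule card_mono) auto
  then interpret spir_scheme M W RS F Q A N K L m u "real CARD('f)"
    using assms by unfold_locales simp_all
  define x where "x = ent (real CARD('f)) M (comps RS S)"
  define y where "y = ent (real CARD('f)) M (comps RS {..<m})"
  have bound: "real L \<le> x + (real N - 1) * y"
    using user_randomness_bound[OF assms(7)] assms(1)
    unfolding x_def y_def ent_eq_H by (simp add: of_nat_diff)
  have N: "1 < real N" and L: "0 < real L"
    using assms(1,3) by simp_all
  have "real N / (real N - 1) * 1 \<le> real N / (real N - 1) * ((x + (real N - 1) * y) / real L)"
    using bound N L by (intro mult_left_mono) simp_all
  also have "\<dots> = real N / (real N - 1) * (x / real L) + real N * (y / real L)"
    using N L by (simp add: field_simps)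
  finally show ?thesis
    unfolding x_def y_def by simp
qed

end
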